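(* Let $X_1$, $X_2$ be subcomplexes of a simplicial complex $X$ such that $X = X_1 \cup X_2$ and $\dim(X_1\cap X_2) = \dim(X)$. If $X_1$ and $X_2$ are both $q$-rigid, then $X$ is $q$-rigid. If, moreover (with $X_1$, $X_2$ both $q$-rigid), $X$ is minimally $q$-rigid, then both $X_1$ and $X_2$ are minimally $q$-rigid.
   Context: A simplicial complex is a finite set of finite sets closed under taking subsets; an element of size $i+1$ is an $i$-face; 1-faces are edges; $V(X)$ is the vertex set; the dimension is the maximal face dimension. $X$ is connected if its edge graph is connected. For a positive integer $q$, a $d$-dimensional simplicial complex $X$ is $q$-rigid if $X$ is connected and for every $A\subseteq V(X)$ disjoint from at least one $d$-face of $X$, the number of edges of $X$ meeting $A$ is at least $q\cdot\#(A)$. An $n$-vertex $d$-dimensional complex is minimally $q$-rigid if it is $q$-rigid and has exactly $(n-d-1)q+\binom{d+1}{2}$ edges. *)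

theory Defs
  imports Main
begin

definition simplicial_complex :: "'a set set \<Rightarrow> bool" where
  "simplicial_complex X \<longleftrightarrow> finite X \<and> (\<forall>F\<in>X. finite F) \<and> (\<forall>F\<in>X. \<forall>G. G \<subseteq> F \<longrightarrow> G \<in> X)"

definition vertices :: "'a set set \<Rightarrow> 'a set" where
  "vertices X = \<Union>X"

text \<open>Dimension = maximal face dimension (face of size i+1 has dimension i).
  Integer valued; the empty complex and the complex with only the empty face get -1.\<close>
definition cdim :: "'a set set \<Rightarrow> int" where
  "cdim X = (if X = {} then -1 else Max ((\<lambda>F. int (card F) - 1) ` X))"

definition faces_of_dim :: "'a set set \<Rightarrow> int \<Rightarrow> 'a set set" where
  "faces_of_dim X i = {F \<in> X. int (card F) = i + 1}"

definition edges :: "'a set set \<Rightarrow> 'a set set" where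
  "edges X = {F \<in> X. card F = 2}"

definition edge_rel :: "'a set set \<Rightarrow> ('a \<times> 'a) set" where
  "edge_rel X = {(u, v). {u, v} \<in> edges X}"

definition complex_connected :: "'a set set \<Rightarrow> bool" where
  "complex_connected X \<longleftrightarrow> (\<forall>u\<in>vertices X. \<forall>v\<in>vertices X. (u, v) \<in> (edge_rel X)\<^sup>*)"

definition edges_meeting :: "'a set set \<Rightarrow> 'a set \<Rightarrow> 'a set set" where
  "edges_meeting X A = {e \<in> edges X. e \<inter> A \<noteq> {}}"

definition q_rigid :: "nat \<Rightarrow> 'a set set \<Rightarrow> bool" where
  "q_rigid q X \<longleftrightarrow> complex_connected X \<and>
     (\<forall>A. A \<subseteq> vertices X \<and> (\<exists>F\<in>faces_of_dim X (cdim X). A \<inter> F = {})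
          \<longrightarrow> card (edges_meeting X A) \<ge> q * card A)"

definition minimally_q_rigid :: "nat \<Rightarrow> 'a set set \<Rightarrow> bool" where
  "minimally_q_rigid q X \<longleftrightarrow> q_rigid q X \<and>
     int (card (edges X)) =
       (int (card (vertices X)) - cdim X - 1) * int q + int ((nat (cdim X + 1)) choose 2)"

end

theory Submission
  imports Defs
begin

text \<open>Let \<open>d = dim X\<close> and let \<open>G\<close> be a \<open>d\<close>-face of \<open>X\<^sub>1 \<inter> X\<^sub>2\<close>. Connectivity of \<open>X\<close> follows by
  joining both parts through a vertex of \<open>G\<close>. Given \<open>A\<close> avoiding a \<open>d\<close>-face \<open>F\<close>, say of \<open>X\<^sub>1\<close>,
  split \<open>A = A\<^sub>1 \<union> A\<^sub>2\<close> with \<open>A\<^sub>1 = A \<inter> V(X\<^sub>1)\<close>: rigidity of \<open>X\<^sub>1\<close> (at \<open>F\<close>) and of \<open>X\<^sub>2\<close> (at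
  \<open>G \<subseteq> V(X\<^sub>1)\<close>) give \<open>q\<cdot>#A\<^sub>1 + q\<cdot>#A\<^sub>2\<close> edges meeting \<open>A\<close>, and these two edge sets are disjoint
  because edges of \<open>X\<^sub>1\<close> lie in \<open>V(X\<^sub>1)\<close>, which \<open>A\<^sub>2\<close> avoids.

  Every \<open>q\<close>-rigid complex has at least \<open>(n-d-1)q + C(d+1,2)\<close> edges: the edges inside a
  \<open>d\<close>-face plus those meeting its complement. Applying rigidity of \<open>X\<^sub>2\<close> to \<open>V(X) - V(X\<^sub>1)\<close>
  gives \<open>#E(X) \<ge> #E(X\<^sub>1) + q(#V(X) - #V(X\<^sub>1))\<close>, so if \<open>X\<close> attains the bound, \<open>X\<^sub>1\<close> cannot
  exceed it.\<close>

lemma simplicial_complex_downward_closed: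
  "simplicial_complex X \<Longrightarrow> F \<in> X \<Longrightarrow> G \<subseteq> F \<Longrightarrow> G \<in> X"
  unfolding simplicial_complex_def by blast

lemma simplicial_complex_finite: "simplicial_complex X \<Longrightarrow> finite X"
  unfolding simplicial_complex_def by blast

lemma finite_vertices: "simplicial_complex X \<Longrightarrow> finite (vertices X)"
  unfolding simplicial_complex_def vertices_def by blast

lemma finite_edges: "simplicial_complex X \<Longrightarrow> finite (edges X)"
  unfolding simplicial_complex_def edges_def by auto

lemma simplicial_complex_Un:
  "simplicial_complex X1 \<Longrightarrow> simplicial_complex X2 \<Longrightarrow> simplicial_complex (X1 \<union> X2)"
  unfolding simplicial_complex_def by (meson UnE UnI1 UnI2 finite_UnI)

lemma face_subset_vertices: "F \<in> X \<Longrightarrow> F \<subseteq> vertices X"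
  unfolding vertices_def by blast

lemma edge_subset_vertices: "e \<in> edges X \<Longrightarrow> e \<subseteq> vertices X"
  unfolding vertices_def edges_def by blast

lemma vertices_Un: "vertices (X1 \<union> X2) = vertices X1 \<union> vertices X2"
  unfolding vertices_def by blast

lemma edges_mono: "X1 \<subseteq> X2 \<Longrightarrow> edges X1 \<subseteq> edges X2"
  unfolding edges_def by blast

lemma edges_meeting_subset: "edges_meeting X A \<subseteq> edges X"
  unfolding edges_meeting_def by blast

lemma q_rigidD:
  assumes "q_rigid q X" "A \<subseteq> vertices X" "F \<in> faces_of_dim X (cdim X)" "A \<inter> F = {}"
  shows "q * card A \<le> card (edges_meeting X A)"
  using assms unfolding q_rigid_def by blast

lemma cdim_ge_card: "finite X \<Longrightarrow> F \<in> X \<Longrightarrow> int (card F) - 1 \<le> cdim X"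
  unfolding cdim_def by auto

lemma cdim_attained:
  assumes "finite X" "X \<noteq> {}"
  shows "\<exists>F\<in>X. int (card F) = cdim X + 1"
proof -
  have "Max ((\<lambda>F. int (card F) - 1) ` X) \<in> (\<lambda>F. int (card F) - 1) ` X"
    using assms by (intro Max_in) auto
  then show ?thesis using assms(2) unfolding cdim_def by auto
qed

lemma cdim_ge_minus_one: "finite X \<Longrightarrow> cdim X \<ge> -1"
  using cdim_attained[of X] by (cases "X = {}") (auto simp: cdim_def)

lemma cdim_mono:
  assumes "finite X" "Y \<subseteq> X"
  shows "cdim Y \<le> cdim X"
proof (cases "Y = {}")
  case True
  then show ?thesis using cdim_ge_minus_one[OF assms(1)] by (simp add: cdim_def)
next
  case False
  with finite_subset[OF assms(2,1)] obtain F where "F \<in> Y" "int (card F) = cdim Y + 1"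
    using cdim_attained by blast
  then show ?thesis using cdim_ge_card[OF assms(1), of F] assms(2) by auto
qed

lemma cdim_eq_if_between:
  assumes "finite X" "Y \<subseteq> Z" "Z \<subseteq> X" "cdim Y = cdim X"
  shows "cdim Z = cdim X"
  using cdim_mono[OF assms(1,3)] cdim_mono[OF finite_subset[OF assms(3,1)] assms(2)] assms(4)
  by linarith

lemma cdim_nonneg_if_vertices:
  assumes "simplicial_complex X" "vertices X \<noteq> {}"
  shows "cdim X \<ge> 0"
proof -
  obtain v F where "v \<in> F" "F \<in> X" using assms(2) unfolding vertices_def by blast
  then have "{v} \<in> X" using simplicial_complex_downward_closed[OF assms(1)] by blast
  then show ?thesis using cdim_ge_card[OF simplicial_complex_finite[OF assms(1)]] by fastforce
qed

lemma common_top_face: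
  assumes "simplicial_complex X" "X1 \<inter> X2 \<subseteq> X" "cdim (X1 \<inter> X2) = cdim X"
    and "vertices X \<noteq> {}"
  obtains G where "G \<in> X1" "G \<in> X2" "int (card G) = cdim X + 1" "G \<noteq> {}"
proof -
  have d: "cdim X \<ge> 0" using cdim_nonneg_if_vertices[OF assms(1,4)] .
  then have "X1 \<inter> X2 \<noteq> {}" using assms(3) by (auto simp: cdim_def)
  moreover have "finite (X1 \<inter> X2)"
    using finite_subset[OF assms(2) simplicial_complex_finite[OF assms(1)]] .
  ultimately obtain G where G: "G \<in> X1 \<inter> X2" "int (card G) = cdim X + 1"
    using cdim_attained assms(3) by metis
  moreover from G(2) d have "G \<noteq> {}" by auto
  ultimately show ?thesis using that by blast
qed

lemma complex_connected_Un:
  assumes "complex_connected X1" "complex_connected X2"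
    and "w \<in> vertices X1" "w \<in> vertices X2"
  shows "complex_connected (X1 \<union> X2)"
proof -
  have reach: "(u, v) \<in> (edge_rel (X1 \<union> X2))\<^sup>*"
    if "complex_connected Y" "Y \<subseteq> X1 \<union> X2" "u \<in> vertices Y" "v \<in> vertices Y" for Y u v
  proof -
    have "(edge_rel Y)\<^sup>* \<subseteq> (edge_rel (X1 \<union> X2))\<^sup>*"
      using edges_mono[OF \<open>Y \<subseteq> X1 \<union> X2\<close>] by (intro rtrancl_mono) (auto simp: edge_rel_def)
    with that show ?thesis unfolding complex_connected_def by blast
  qed
  have "(u, w) \<in> (edge_rel (X1 \<union> X2))\<^sup>*" "(w, v) \<in> (edge_rel (X1 \<union> X2))\<^sup>*"
    if "u \<in> vertices (X1 \<union> X2)" "v \<in> vertices (X1 \<union> X2)" for u v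
    using that reach[of X1] reach[of X2] assms unfolding vertices_Un by blast+
  then show ?thesis unfolding complex_connected_def by (meson rtrancl_trans)
qed

lemma card_edges_meeting_Un_ge:
  assumes "simplicial_complex X1" "simplicial_complex X2"
    and "q_rigid q X1" "q_rigid q X2"
    and "G \<in> X1" "G \<in> faces_of_dim X2 (cdim X2)"
    and "A \<subseteq> vertices (X1 \<union> X2)" "F \<in> faces_of_dim X1 (cdim X1)" "A \<inter> F = {}"
  shows "q * card A \<le> card (edges_meeting (X1 \<union> X2) A)"
proof -
  define A1 where "A1 = A \<inter> vertices X1"
  define A2 where "A2 = A - vertices X1"
  have sc: "simplicial_complex (X1 \<union> X2)" using simplicial_complex_Un[OF assms(1,2)] .
  have "q * card A1 \<le> card (edges_meeting X1 A1)"
    using assms(9) by (intro q_rigidD[OF assms(3) _ assms(8)]) (auto simp: A1_def)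
  moreover have "q * card A2 \<le> card (edges_meeting X2 A2)"
    using assms(7) face_subset_vertices[OF assms(5)]
    by (intro q_rigidD[OF assms(4) _ assms(6)]) (auto simp: A2_def vertices_Un)
  moreover have "card A = card A1 + card A2"
    using card_Int_Diff[OF finite_subset[OF assms(7) finite_vertices[OF sc]]]
    unfolding A1_def A2_def .
  moreover have "card (edges_meeting X1 A1) + card (edges_meeting X2 A2)
                 \<le> card (edges_meeting (X1 \<union> X2) A)"
  proof -
    have fin: "finite (edges_meeting (X1 \<union> X2) A)"
      using finite_subset[OF edges_meeting_subset finite_edges[OF sc]] .
    have "edges_meeting X1 A1 \<inter> edges_meeting X2 A2 = {}"
      using edge_subset_vertices[of _ X1] by (fastforce simp: edges_meeting_def A2_def)
    moreover have sub: "edges_meeting X1 A1 \<union> edges_meeting X2 A2 \<subseteq> edges_meeting (X1 \<union> X2) A"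
      using edges_mono[of X1 "X1 \<union> X2"] edges_mono[of X2 "X1 \<union> X2"]
      by (auto simp: edges_meeting_def A1_def A2_def)
    moreover have "finite (edges_meeting X1 A1)" "finite (edges_meeting X2 A2)"
      using finite_subset[OF sub fin] by auto
    ultimately show ?thesis using card_mono[OF fin sub] by (simp add: card_Un_disjoint)
  qed
  ultimately show ?thesis by (simp add: add_mult_distrib2)
qed

lemma q_rigid_Un:
  assumes "simplicial_complex X1" "simplicial_complex X2"
    and "q_rigid q X1" "q_rigid q X2"
    and "cdim X1 = cdim (X1 \<union> X2)" "cdim X2 = cdim (X1 \<union> X2)"
    and "G \<in> faces_of_dim X1 (cdim X1)" "G \<in> faces_of_dim X2 (cdim X2)" "G \<noteq> {}"
  shows "q_rigid q (X1 \<union> X2)"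
proof -
  have G: "G \<in> X1" "G \<in> X2" using assms(7,8) by (auto simp: faces_of_dim_def)
  show ?thesis
    unfolding q_rigid_def
  proof (intro conjI allI impI)
    obtain w where "w \<in> G" using assms(9) by blast
    then show "complex_connected (X1 \<union> X2)"
      using assms(3,4) G face_subset_vertices
      by (intro complex_connected_Un[of _ _ w]) (auto simp: q_rigid_def)
  next
    fix A
    assume "A \<subseteq> vertices (X1 \<union> X2) \<and>
      (\<exists>F\<in>faces_of_dim (X1 \<union> X2) (cdim (X1 \<union> X2)). A \<inter> F = {})"
    then obtain F where A: "A \<subseteq> vertices (X1 \<union> X2)" and F: "F \<in> X1 \<union> X2" "A \<inter> F = {}"
      and card_F: "int (card F) = cdim (X1 \<union> X2) + 1"
      unfolding faces_of_dim_def by blast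
    show "q * card A \<le> card (edges_meeting (X1 \<union> X2) A)"
    proof (cases "F \<in> X1")
      case True
      then have "F \<in> faces_of_dim X1 (cdim X1)" using card_F assms(5) by (simp add: faces_of_dim_def)
      from card_edges_meeting_Un_ge[OF assms(1-4) G(1) assms(8) A this F(2)] show ?thesis .
    next
      case False
      then have "F \<in> faces_of_dim X2 (cdim X2)"
        using F(1) card_F assms(6) by (simp add: faces_of_dim_def)
      then show ?thesis
        using card_edges_meeting_Un_ge[OF assms(2,1,4,3) G(2) assms(7), of A F] A F(2)
        by (simp add: Un_commute)
    qed
  qed
qed

lemma q_rigid_card_edges_ge:
  assumes "simplicial_complex X" "q_rigid q X" "F \<in> faces_of_dim X (cdim X)"
  shows "(int (card (vertices X)) - cdim X - 1) * int q + int (nat (cdim X + 1) choose 2)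
           \<le> int (card (edges X))"
proof -
  have F: "F \<in> X" "int (card F) = cdim X + 1" using assms(3) by (auto simp: faces_of_dim_def)
  define A where "A = vertices X - F"
  define P where "P = {e. e \<subseteq> F \<and> card e = 2}"
  have FV: "F \<subseteq> vertices X" using face_subset_vertices[OF F(1)] .
  have fin_V: "finite (vertices X)" and fin_E: "finite (edges X)"
    using assms(1) by (auto intro: finite_vertices finite_edges)
  have "q * card A \<le> card (edges_meeting X A)"
    using q_rigidD[OF assms(2) _ assms(3)] by (auto simp: A_def)
  moreover have "card P + card (edges_meeting X A) \<le> card (edges X)"
  proof -
    have sub: "P \<union> edges_meeting X A \<subseteq> edges X"
      using simplicial_complex_downward_closed[OF assms(1) F(1)] edges_meeting_subset
      by (auto simp: P_def edges_def)
    have "P \<inter> edges_meeting X A = {}" by (auto simp: P_def A_def edges_meeting_def)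
    with finite_subset[OF sub fin_E] card_mono[OF fin_E sub] show ?thesis
      by (simp add: card_Un_disjoint)
  qed
  ultimately have "card P + q * card A \<le> card (edges X)" by linarith
  then have "int (card P) + int q * int (card A) \<le> int (card (edges X))"
    unfolding of_nat_mult[symmetric] of_nat_add[symmetric] of_nat_le_iff .
  moreover have "card P = nat (cdim X + 1) choose 2"
  proof -
    have "nat (cdim X + 1) = card F" using F(2) by simp
    then show ?thesis unfolding P_def using n_subsets[OF finite_subset[OF FV fin_V]] by simp
  qed
  moreover have "int (card A) = int (card (vertices X)) - cdim X - 1"
    using card_Diff_subset[OF finite_subset[OF FV fin_V] FV] card_mono[OF fin_V FV] F(2)
    by (simp add: A_def of_nat_diff)
  ultimately show ?thesis by (simp add: mult.commute)
qed

lemma card_edges_Un_ge: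
  assumes "simplicial_complex X1" "simplicial_complex X2" "q_rigid q X2"
    and "G \<in> X1" "G \<in> faces_of_dim X2 (cdim X2)"
  shows "card (edges X1) + q * card (vertices X2 - vertices X1) \<le> card (edges (X1 \<union> X2))"
proof -
  define A where "A = vertices X2 - vertices X1"
  have fin: "finite (edges (X1 \<union> X2))"
    using finite_edges[OF simplicial_complex_Un[OF assms(1,2)]] .
  have "q * card A \<le> card (edges_meeting X2 A)"
    using face_subset_vertices[OF assms(4)] by (intro q_rigidD[OF assms(3) _ assms(5)]) (auto simp: A_def)
  moreover have sub: "edges X1 \<union> edges_meeting X2 A \<subseteq> edges (X1 \<union> X2)"
    using edges_mono[of X1 "X1 \<union> X2"] edges_mono[of X2 "X1 \<union> X2"] edges_meeting_subset by blast
  moreover have "edges X1 \<inter> edges_meeting X2 A = {}"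
    using edge_subset_vertices[of _ X1] by (fastforce simp: edges_meeting_def A_def)
  ultimately show ?thesis
    using finite_subset[OF sub fin] card_mono[OF fin sub] by (simp add: A_def card_Un_disjoint)
qed

lemma minimally_q_rigid_Un_left:
  assumes "simplicial_complex X1" "simplicial_complex X2" "q_rigid q X1" "q_rigid q X2"
    and "G \<in> faces_of_dim X1 (cdim X1)" "G \<in> faces_of_dim X2 (cdim X2)"
    and "cdim X1 = cdim (X1 \<union> X2)" "minimally_q_rigid q (X1 \<union> X2)"
  shows "minimally_q_rigid q X1"
proof -
  let ?d = "cdim X1" and ?n = "int (card (vertices (X1 \<union> X2)))" and ?n1 = "int (card (vertices X1))"
  have "G \<in> X1" using assms(5) by (simp add: faces_of_dim_def)
  have V1: "vertices X1 \<subseteq> vertices (X1 \<union> X2)" by (simp add: vertices_Un)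
  have card_new: "int (card (vertices X2 - vertices X1)) = ?n - ?n1"
  proof -
    have "vertices X2 - vertices X1 = vertices (X1 \<union> X2) - vertices X1" by (auto simp: vertices_Un)
    then show ?thesis
      using finite_vertices[OF simplicial_complex_Un[OF assms(1,2)]] V1
      by (simp add: card_Diff_subset card_mono finite_subset of_nat_diff)
  qed
  have "int (card (edges X1)) + int q * (?n - ?n1) \<le> int (card (edges (X1 \<union> X2)))"
    using card_edges_Un_ge[OF assms(1,2,4) \<open>G \<in> X1\<close> assms(6)]
    unfolding card_new[symmetric] of_nat_mult[symmetric] of_nat_add[symmetric] of_nat_le_iff .
  moreover have "int (card (edges (X1 \<union> X2))) = (?n - ?d - 1) * int q + int (nat (?d + 1) choose 2)"
    using assms(7,8) by (simp add: minimally_q_rigid_def)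
  ultimately have "int (card (edges X1)) \<le> (?n1 - ?d - 1) * int q + int (nat (?d + 1) choose 2)"
    by (simp add: algebra_simps)
  then show ?thesis
    using q_rigid_card_edges_ge[OF assms(1,3,5)] assms(3) by (simp add: minimally_q_rigid_def)
qed

lemma cdim_no_vertices:
  assumes "simplicial_complex X" "vertices X = {}"
  shows "cdim X = -1"
proof -
  have "card F = 0" if "F \<in> X" for F using face_subset_vertices[OF that] assms(2) by simp
  then show ?thesis by (auto simp: cdim_def image_constant_conv)
qed

lemma q_rigid_no_vertices: "vertices X = {} \<Longrightarrow> q_rigid q X"
  by (simp add: q_rigid_def complex_connected_def)

lemma minimally_q_rigid_no_vertices:
  assumes "simplicial_complex X" "vertices X = {}"
  shows "minimally_q_rigid q X"
proof -
  have "edges X = {}" using edge_subset_vertices[of _ X] assms(2) by (fastforce simp: edges_def)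
  then show ?thesis
    using q_rigid_no_vertices[OF assms(2)] cdim_no_vertices[OF assms] assms(2)
    by (simp add: minimally_q_rigid_def)
qed

theorem lemma6p5:
  fixes X X1 X2 :: "'a set set" and q :: nat
  assumes "q > 0"
    and "simplicial_complex X" and "simplicial_complex X1" and "simplicial_complex X2"
    and "X1 \<subseteq> X" and "X2 \<subseteq> X" and "X = X1 \<union> X2"
    and "cdim (X1 \<inter> X2) = cdim X"
    and "q_rigid q X1" and "q_rigid q X2"
  shows "q_rigid q X \<and>
         (minimally_q_rigid q X \<longrightarrow> minimally_q_rigid q X1 \<and> minimally_q_rigid q X2)"
proof (cases "vertices X = {}")
  case True
  then have "vertices X1 = {}" "vertices X2 = {}" unfolding assms(7) vertices_Un by auto
  then show ?thesis
    using True assms(3,4) q_rigid_no_vertices minimally_q_rigid_no_vertices by blast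
next
  case False
  have "X1 \<inter> X2 \<subseteq> X" using assms(5) by blast
  with assms(2,8) False obtain G where G: "G \<in> X1" "G \<in> X2" "int (card G) = cdim X + 1" "G \<noteq> {}"
    using common_top_face by blast
  have fin: "finite X" using simplicial_complex_finite[OF assms(2)] .
  have d1: "cdim X1 = cdim (X1 \<union> X2)" and d2: "cdim X2 = cdim (X1 \<union> X2)"
    using cdim_eq_if_between[OF fin _ assms(5) assms(8)] cdim_eq_if_between[OF fin _ assms(6) assms(8)]
      assms(7) by auto
  have G1: "G \<in> faces_of_dim X1 (cdim X1)" and G2: "G \<in> faces_of_dim X2 (cdim X2)"
    using G d1 d2 assms(7) by (auto simp: faces_of_dim_def)
  have "q_rigid q (X1 \<union> X2)"
    using q_rigid_Un[OF assms(3,4,9,10) d1 d2 G1 G2 G(4)] .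
  moreover have "minimally_q_rigid q X1" "minimally_q_rigid q X2"
    if "minimally_q_rigid q (X1 \<union> X2)"
    using minimally_q_rigid_Un_left[OF assms(3,4,9,10) G1 G2 d1 that]
      minimally_q_rigid_Un_left[OF assms(4,3,10,9) G2 G1] d2 that by (simp_all add: Un_commute)
  ultimately show ?thesis using assms(7) by blast
qed

end
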